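(* Let $S$ be an intra-regular $\Gamma$-AG$^{**}$-groupoid and $A\subseteq S$ nonempty. Then $A$ is a $\Gamma$-bi-ideal (respectively $\Gamma$-generalized bi-ideal) of $S$ if and only if $(A\Gamma S)\Gamma A=A$ and $A\Gamma A=A$.
   Context: Let $S$ and $\Gamma$ be nonempty sets with a map $S\times\Gamma\times S\to S$, $(x,\gamma,y)\mapsto x\gamma y$. $S$ is a $\Gamma$-AG-groupoid if $(x\gamma y)\delta z=(z\gamma y)\delta x$ for all $x,y,z\in S$, $\gamma,\delta\in\Gamma$; it is a $\Gamma$-AG$^{**}$-groupoid if moreover $a\alpha(b\beta c)=b\alpha(a\beta c)$ for all $a,b,c\in S$, $\alpha,\beta\in\Gamma$. For subsets $A,B\subseteq S$, $A\Gamma B=\{a\gamma b: a\in A,\gamma\in\Gamma,b\in B\}$. $S$ is intra-regular if for every $a\in S$ there exist $x,y\in S$ and $\beta,\gamma,\delta\in\Gamma$ with $a=(x\beta(a\delta a))\gamma y$. A nonempty subset $B\subseteq S$ is a $\Gamma$-generalized bi-ideal if $(B\Gamma S)\Gamma B\subseteq B$, and a $\Gamma$-bi-ideal if in addition $B\Gamma B\subseteq B$. *)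

theory Defs
  imports Main
begin

text \<open>A Gamma-groupoid: S is the type 'a, Gamma is the type 'g (types are nonempty),
  and the ternary map S x Gamma x S -> S is a function op.\<close>

definition gset_prod :: "('a \<Rightarrow> 'g \<Rightarrow> 'a \<Rightarrow> 'a) \<Rightarrow> 'a set \<Rightarrow> 'a set \<Rightarrow> 'a set" where
  "gset_prod op A B = {op a g b | a g b. a \<in> A \<and> b \<in> B}"

definition gamma_AG_groupoid :: "('a \<Rightarrow> 'g \<Rightarrow> 'a \<Rightarrow> 'a) \<Rightarrow> bool" where
  "gamma_AG_groupoid op \<longleftrightarrow>
     (\<forall>x y z \<gamma> \<delta>. op (op x \<gamma> y) \<delta> z = op (op z \<gamma> y) \<delta> x)"

definition gamma_AG2_groupoid :: "('a \<Rightarrow> 'g \<Rightarrow> 'a \<Rightarrow> 'a) \<Rightarrow> bool" where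
  "gamma_AG2_groupoid op \<longleftrightarrow> gamma_AG_groupoid op \<and>
     (\<forall>a b c \<alpha> \<beta>. op a \<alpha> (op b \<beta> c) = op b \<alpha> (op a \<beta> c))"

definition intra_regular :: "('a \<Rightarrow> 'g \<Rightarrow> 'a \<Rightarrow> 'a) \<Rightarrow> bool" where
  "intra_regular op \<longleftrightarrow>
     (\<forall>a. \<exists>x y \<beta> \<gamma> \<delta>. a = op (op x \<beta> (op a \<delta> a)) \<gamma> y)"

definition gen_bi_ideal :: "('a \<Rightarrow> 'g \<Rightarrow> 'a \<Rightarrow> 'a) \<Rightarrow> 'a set \<Rightarrow> bool" where
  "gen_bi_ideal op B \<longleftrightarrow> B \<noteq> {} \<and>
     gset_prod op (gset_prod op B UNIV) B \<subseteq> B"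

definition bi_ideal :: "('a \<Rightarrow> 'g \<Rightarrow> 'a \<Rightarrow> 'a) \<Rightarrow> 'a set \<Rightarrow> bool" where
  "bi_ideal op B \<longleftrightarrow> gen_bi_ideal op B \<and> gset_prod op B B \<subseteq> B"

end

theory Submission
  imports Defs
begin

(* Write AB for gset_prod op A B and S for UNIV.  In a Gamma-AG**-groupoid:
   (1) for every A the set (AS)A is closed under products, ((AS)A)((AS)A) <= (AS)A,
       by a purely equational rearrangement with the two defining laws;
   (2) if S is moreover intra-regular, every a satisfies a = (a b u) g a and
       a = a g ((a d v) d a) for suitable u, v and gammas, hence A <= (AS)A and
       A <= A((AS)A) for every A.
   For a generalized bi-ideal A, (AS)A <= A together with (2) gives (AS)A = A;
   then AA = ((AS)A)((AS)A) <= (AS)A = A by (1) and A <= A((AS)A) <= AA by (2), so AA = A.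
   In particular every generalized bi-ideal is a bi-ideal, and both conditions of the
   theorem are equivalent to the two set equations (the converse direction being trivial). *)

locale gamma_AG2 =
  fixes op :: "'a \<Rightarrow> 'g \<Rightarrow> 'a \<Rightarrow> 'a"
  assumes AG2: "gamma_AG2_groupoid op"
begin

lemma left_invertive: "op (op x g y) d z = op (op z g y) d x"
  using AG2 unfolding gamma_AG2_groupoid_def gamma_AG_groupoid_def by blast

lemma left_comm: "op a g (op b d c) = op b g (op a d c)"
  using AG2 unfolding gamma_AG2_groupoid_def by blast

text \<open>The rearrangement behind the closure of (AS)A under products: a product of two
  elements of the shape (p s) q is again of that shape, with outer factors from the inputs.\<close>
lemma product_rearrangement:
  "op (op (op p1 g1 s) d1 p2) g (op (op q1 h t) k q2)
     = op (op q2 h (op (op t k (op p1 g1 s)) d1 p2)) g q1"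
proof -
  have "op (op (op p1 g1 s) d1 p2) g (op (op q1 h t) k q2)
      = op (op q1 h t) g (op (op (op p1 g1 s) d1 p2) k q2)" by (rule left_comm)
  also have "\<dots> = op (op (op (op (op p1 g1 s) d1 p2) k q2) h t) g q1" by (rule left_invertive)
  also have "\<dots> = op (op (op (op q2 d1 p2) k (op p1 g1 s)) h t) g q1"
    by (simp only: left_invertive[of "op p1 g1 s" d1 p2 k q2])
  also have "\<dots> = op (op (op t k (op p1 g1 s)) h (op q2 d1 p2)) g q1"
    by (simp only: left_invertive[of "op q2 d1 p2" k "op p1 g1 s" h t])
  also have "\<dots> = op (op q2 h (op (op t k (op p1 g1 s)) d1 p2)) g q1"
    by (simp only: left_comm[of "op t k (op p1 g1 s)" h q2 d1 p2])
  finally show ?thesis .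
qed

lemma sandwich_closed:
  "gset_prod op (gset_prod op (gset_prod op A UNIV) A) (gset_prod op (gset_prod op A UNIV) A)
     \<subseteq> gset_prod op (gset_prod op A UNIV) A"
proof
  fix z assume "z \<in> gset_prod op (gset_prod op (gset_prod op A UNIV) A)
                                   (gset_prod op (gset_prod op A UNIV) A)"
  then obtain p1 g1 s d1 p2 g q1 h t k q2 where
    z: "z = op (op (op p1 g1 s) d1 p2) g (op (op q1 h t) k q2)"
    and mem: "p2 \<in> A" "q1 \<in> A" "q2 \<in> A"
    unfolding gset_prod_def by blast
  have "z = op (op q2 h (op (op t k (op p1 g1 s)) d1 p2)) g q1"
    unfolding z by (rule product_rearrangement)
  then show "z \<in> gset_prod op (gset_prod op A UNIV) A"
    using mem unfolding gset_prod_def by blast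
qed

lemma intra_regular_left_sandwich:
  assumes regular: "a = op (op x b (op a d a)) g y"
  shows "a = op (op a b (op (op (op y d (op x g y)) b (op x d (op x b (op a d a)))) g y)) g a"
proof -
  have "a = op (op x b (op a d a)) g y" by (rule regular)
  also have "\<dots> = op (op a b (op x d a)) g y" by (simp only: left_comm)
  also have "\<dots> = op (op y b (op x d a)) g a" by (rule left_invertive)
  also have "\<dots> = op (op y b (op x d (op (op x b (op a d a)) g y))) g a" using regular by metis
  also have "\<dots> = op (op y b (op (op x b (op a d a)) d (op x g y))) g a" by (simp only: left_comm)
  also have "\<dots> = op (op (op x b (op a d a)) b (op y d (op x g y))) g a" by (simp only: left_comm)
  also have "\<dots> = op (op (op x b (op (op (op x b (op a d a)) g y) d a)) b (op y d (op x g y))) g a"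
    using regular by metis
  also have "\<dots> = op (op (op x b (op (op a g y) d (op x b (op a d a)))) b (op y d (op x g y))) g a"
    by (simp only: left_invertive[of "op x b (op a d a)" g y d a])
  also have "\<dots> = op (op (op (op a g y) b (op x d (op x b (op a d a)))) b (op y d (op x g y))) g a"
    by (simp only: left_comm[of x b "op a g y"])
  also have "\<dots> = op (op (op (op y d (op x g y)) b (op x d (op x b (op a d a)))) b (op a g y)) g a"
    by (rule arg_cong[where f = "\<lambda>w. op w g a"], rule left_invertive)
  also have "\<dots> = op (op a b (op (op (op y d (op x g y)) b (op x d (op x b (op a d a)))) g y)) g a"
    by (simp only: left_comm[of _ b a g y])
  finally show ?thesis .
qed

lemma intra_regular_right_sandwich:
  assumes regular: "a = op (op x b (op a d a)) g y"
  shows "a = op a g (op (op a d (op (op (op y b x) b x) g y)) d a)"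
proof -
  have "a = op (op x b (op a d a)) g y" by (rule regular)
  also have "\<dots> = op (op x b (op a d (op (op x b (op a d a)) g y))) g y" using regular by metis
  also have "\<dots> = op (op x b (op (op x b (op a d a)) d (op a g y))) g y" by (simp only: left_comm)
  also have "\<dots> = op (op (op x b (op a d a)) b (op x d (op a g y))) g y" by (simp only: left_comm)
  also have "\<dots> = op (op (op (op x d (op a g y)) b (op a d a)) b x) g y"
    by (simp only: left_invertive[of x b "op a d a" b])
  also have "\<dots> = op (op y b x) g (op (op x d (op a g y)) b (op a d a))" by (rule left_invertive)
  also have "\<dots> = op (op y b x) g (op (op (op a d a) d (op a g y)) b x)"
    by (simp only: left_invertive[of x d "op a g y" b "op a d a"])
  also have "\<dots> = op (op (op a d a) d (op a g y)) g (op (op y b x) b x)" by (rule left_comm)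
  also have "\<dots> = op (op (op (op y b x) b x) d (op a g y)) g (op a d a)" by (rule left_invertive)
  also have "\<dots> = op a g (op (op (op (op y b x) b x) d (op a g y)) d a)" by (rule left_comm)
  also have "\<dots> = op a g (op (op a d (op (op (op y b x) b x) g y)) d a)"
    by (simp only: left_comm[of "op (op y b x) b x" d a g y])
  finally show ?thesis .
qed

lemma intra_regular_sandwich_covers:
  assumes "intra_regular op"
  shows "A \<subseteq> gset_prod op (gset_prod op A UNIV) A"
    and "A \<subseteq> gset_prod op A (gset_prod op (gset_prod op A UNIV) A)"
proof -
  have witness: "\<exists>x y b g d. a = op (op x b (op a d a)) g y" for a
    using assms unfolding intra_regular_def by blast
  show "A \<subseteq> gset_prod op (gset_prod op A UNIV) A"
  proof
    fix a assume "a \<in> A"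
    with witness[of a] intra_regular_left_sandwich
    show "a \<in> gset_prod op (gset_prod op A UNIV) A" unfolding gset_prod_def by blast
  qed
  show "A \<subseteq> gset_prod op A (gset_prod op (gset_prod op A UNIV) A)"
  proof
    fix a assume "a \<in> A"
    with witness[of a] intra_regular_right_sandwich
    show "a \<in> gset_prod op A (gset_prod op (gset_prod op A UNIV) A)"
      unfolding gset_prod_def by blast
  qed
qed

lemma gen_bi_ideal_idempotent:
  assumes ir: "intra_regular op" and gb: "gen_bi_ideal op A"
  shows "gset_prod op (gset_prod op A UNIV) A = A" and "gset_prod op A A = A"
proof -
  show sandwich: "gset_prod op (gset_prod op A UNIV) A = A"
    using gb intra_regular_sandwich_covers(1)[OF ir] unfolding gen_bi_ideal_def by blast
  have "gset_prod op A A \<subseteq> A"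
    using sandwich_closed[of A] unfolding sandwich .
  moreover have "A \<subseteq> gset_prod op A A"
    using intra_regular_sandwich_covers(2)[OF ir, of A] unfolding sandwich .
  ultimately show "gset_prod op A A = A" by blast
qed

end

theorem mainTheorem5:
  fixes op :: "'a \<Rightarrow> 'g \<Rightarrow> 'a \<Rightarrow> 'a" and A :: "'a set"
  assumes "gamma_AG2_groupoid op" and "intra_regular op" and "A \<noteq> {}"
  shows "(bi_ideal op A \<longleftrightarrow>
            gset_prod op (gset_prod op A UNIV) A = A \<and> gset_prod op A A = A)
       \<and> (gen_bi_ideal op A \<longleftrightarrow>
            gset_prod op (gset_prod op A UNIV) A = A \<and> gset_prod op A A = A)"
proof -
  interpret gamma_AG2 op by (rule gamma_AG2.intro) (rule assms(1))
  have "gen_bi_ideal op A \<longleftrightarrow>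
          gset_prod op (gset_prod op A UNIV) A = A \<and> gset_prod op A A = A"
    using gen_bi_ideal_idempotent[OF assms(2)] assms(3) unfolding gen_bi_ideal_def by auto
  moreover have "bi_ideal op A \<longleftrightarrow> gen_bi_ideal op A"
    using gen_bi_ideal_idempotent(2)[OF assms(2)] unfolding bi_ideal_def by auto
  ultimately show ?thesis by simp
qed

end
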